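(* Let $\mathbb H$ be a separable Hilbert space with inner product $\langle\cdot,\cdot\rangle$, let $g,\nu\in\mathbb H$ with $g\neq 0$ and $\|\nu\|_{\mathbb H}=1$, and let $\mathcal A\in\mathcal L(\mathbb H)$ be a bounded linear operator, with uniformly continuous semigroup $\{e^{t\mathcal A},t\in[0,T]\}$. Let $K(t)=\langle g,e^{t\mathcal A}\nu\rangle$, $t\in[0,T]$. For $u\in L^2_a$ let $X^u$ be the solution of $$X^u(t)=X(0)+\int_0^t K(t-s)\big(\alpha u(s)-\beta X^u(s)\big)ds+\sigma\int_0^t K(t-s)\,dW(s),\quad t\in[0,T].$$ Set $\zeta_0:=\frac{X(0)}{\|g\|_{\mathbb H}^2}g$ and let $\bar{\mathcal A}\in\mathcal L(\mathbb H)$ be given by $\bar{\mathcal A}z:=\mathcal Az-\beta\langle g,z\rangle\nu$, $z\in\mathbb H$. Let $\{\mathcal Z^u_t,t\in[0,T]\}$ be the $\mathbb H$-valued process $$\mathcal Z^u_t=\int_0^t\Big(\bar{\mathcal A}\mathcal Z^u_s-\nu\beta\langle g,\zeta_0\rangle+\nu\alpha u(s)\Big)ds+\int_0^t\sigma\nu\,dW(s).$$ Then for any $t\in[0,T]$, $X^u(t)=\langle g,\zeta_0\rangle+\langle g,\mathcal Z^u_t\rangle$.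
   Context: Fix $T>0$ and constants $\alpha,\beta,\sigma>0$, $X(0)\in\mathbb R$. Let $W$ be a standard one-dimensional Brownian motion on $(\Omega,\mathcal F,\mathbb P)$. $L^2_a$ denotes the space of real-valued square-integrable processes on $\Omega\times[0,T]$ adapted to the filtration generated by $W$. *)

theory Defs
  imports "HOL-Analysis.Analysis" "HOL-Probability.Probability"
begin

definition op_exp :: "('h::banach \<Rightarrow>\<^sub>L 'h) \<Rightarrow> ('h \<Rightarrow>\<^sub>L 'h)" where
  "op_exp B = (\<Sum>n. (1 / fact n) *\<^sub>R (((\<lambda>C. B o\<^sub>L C) ^^ n) id_blinfun))"

definition std_brownian_motion :: "'w measure \<Rightarrow> ('w \<Rightarrow> real \<Rightarrow> real) \<Rightarrow> bool" where
  "std_brownian_motion M W \<longleftrightarrow>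
     prob_space M \<and>
     (\<forall>t. (\<lambda>w. W w t) \<in> borel_measurable M) \<and>
     (AE w in M. W w 0 = 0 \<and> continuous_on {0..} (W w)) \<and>
     (\<forall>s t. 0 \<le> s \<and> s < t \<longrightarrow>
        distributed M lborel (\<lambda>w. W w t - W w s) (normal_density 0 (sqrt (t - s)))) \<and>
     (\<forall>(ts::nat \<Rightarrow> real) n. 0 \<le> ts 0 \<and> (\<forall>i<n. ts i \<le> ts (Suc i)) \<longrightarrow>
        prob_space.indep_vars M (\<lambda>_. borel) (\<lambda>i w. W w (ts (Suc i)) - W w (ts i)) {..<n})"

definition nat_filtration :: "'w measure \<Rightarrow> ('w \<Rightarrow> real \<Rightarrow> real) \<Rightarrow> real \<Rightarrow> 'w measure" where
  "nat_filtration M W t = sigma (space M)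
     {(\<lambda>w. W w s) -` B \<inter> space M | s B. s \<in> {0..t} \<and> B \<in> sets borel}"

definition L2a :: "'w measure \<Rightarrow> ('w \<Rightarrow> real \<Rightarrow> real) \<Rightarrow> real \<Rightarrow> ('w \<Rightarrow> real \<Rightarrow> real) \<Rightarrow> bool" where
  "L2a M W T u \<longleftrightarrow>
     (\<lambda>(w, s). u w s) \<in> borel_measurable (M \<Otimes>\<^sub>M lborel) \<and>
     (\<integral>\<^sup>+ (w, s). indicator {0..T} s * ennreal ((u w s)\<^sup>2) \<partial>(M \<Otimes>\<^sub>M lborel)) < \<infinity> \<and>
     (\<forall>t\<in>{0..T}. (\<lambda>w. u w t) \<in> borel_measurable (nat_filtration M W t))"

text \<open>Pathwise (Ito / left-point Riemann-Stieltjes) integral of a deterministic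
  integrand f against a path w over [a,b]: limit of left-point sums as the mesh tends to 0.\<close>
definition has_stoch_integral ::
  "(real \<Rightarrow> 'b::real_normed_vector) \<Rightarrow> (real \<Rightarrow> real) \<Rightarrow> real \<Rightarrow> real \<Rightarrow> 'b \<Rightarrow> bool" where
  "has_stoch_integral f w a b I \<longleftrightarrow>
     (\<forall>e>0. \<exists>d>0. \<forall>(p::nat \<Rightarrow> real) n.
        p 0 = a \<and> p n = b \<and> (\<forall>i<n. p i < p (Suc i) \<and> p (Suc i) - p i < d) \<longrightarrow>
        norm ((\<Sum>i<n. (w (p (Suc i)) - w (p i)) *\<^sub>R f (p i)) - I) < e)"

end

theory Submission
  imports Defs
begin

text \<open>
  Let \<open>Y(t) = \<langle>g, \<zeta>\<^sub>0\<rangle> + \<langle>g, Z\<^sub>t\<rangle>\<close>. Applying \<open>\<langle>g, e\<^bsup>(t - s)A\<^esup> \<cdot>\<rangle>\<close> to the equation of the lift and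
  exchanging the order of integration (variation of constants) gives
  \<open>\<langle>g, Z\<^sub>t\<rangle> = \<integral>\<^sub>0\<^sup>t K(t - s) (\<alpha> u(s) - \<beta> Y(s)) ds + \<sigma> \<integral>\<^sub>0\<^sup>t K(t - s) dW(s)\<close>.
  As \<open>K\<close> is deterministic and smooth, the last integral is a pathwise Riemann-Stieltjes integral,
  computed by integration by parts against the continuous Brownian path. Hence \<open>D = X - Y\<close>
  solves \<open>D(t) = -\<beta> \<integral>\<^sub>0\<^sup>t K(t - s) D(s) ds\<close>, and since \<open>K\<close> is bounded on \<open>[0, T]\<close>,
  Gronwall's inequality gives \<open>D = 0\<close> on every path.
\<close>

definition blinfun_power :: "('h::banach \<Rightarrow>\<^sub>L 'h) \<Rightarrow> nat \<Rightarrow> 'h \<Rightarrow>\<^sub>L 'h" where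
  "blinfun_power A n = ((\<lambda>C. A o\<^sub>L C) ^^ n) id_blinfun"

lemma blinfun_power_apply: "blinfun_apply (blinfun_power A n) z = (blinfun_apply A ^^ n) z"
  by (induction n arbitrary: z) (auto simp: blinfun_power_def)

lemma blinfun_power_Suc_apply:
  "blinfun_apply (blinfun_power A (Suc n)) z = blinfun_apply (blinfun_power A n) (blinfun_apply A z)"
  by (simp add: blinfun_power_apply funpow_swap1)

lemma norm_blinfun_power_le: "norm (blinfun_power A n) \<le> norm A ^ n"
proof (induction n)
  case 0
  then show ?case by (simp add: blinfun_power_def norm_blinfun_id_le)
next
  case (Suc n)
  have "norm (blinfun_power A (Suc n)) \<le> norm A * norm (blinfun_power A n)"
    unfolding blinfun_power_def funpow.simps o_apply by (rule norm_blinfun_compose)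
  also have "\<dots> \<le> norm A ^ Suc n" using Suc by (simp add: mult_left_mono)
  finally show ?case .
qed

lemma blinfun_power_scaleR: "blinfun_power (t *\<^sub>R A) n = (t ^ n) *\<^sub>R blinfun_power A n"
  by (induction n) (auto intro!: blinfun_eqI simp: blinfun_power_def blinfun.scaleR_left blinfun.scaleR_right)

lemma op_exp_scaleR_sums:
  fixes A :: "'h::banach \<Rightarrow>\<^sub>L 'h"
  shows "(\<lambda>n. (t ^ n / fact n) *\<^sub>R blinfun_power A n) sums op_exp (t *\<^sub>R A)"
proof -
  have "summable (\<lambda>n. (t ^ n / fact n) *\<^sub>R blinfun_power A n)"
  proof (rule summable_norm_cancel, rule summable_comparison_test')
    show "summable (\<lambda>n. (\<bar>t\<bar> * norm A) ^ n / fact n)"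
      using summable_exp[of "\<bar>t\<bar> * norm A"] by (simp add: field_simps)
    show "norm (norm ((t ^ n / fact n) *\<^sub>R blinfun_power A n)) \<le> (\<bar>t\<bar> * norm A) ^ n / fact n" for n
      using mult_left_mono[OF norm_blinfun_power_le, of "\<bar>t\<bar> ^ n / fact n" A n]
      by (simp add: power_abs power_mult_distrib)
  qed
  then show ?thesis
    unfolding op_exp_def blinfun_power_def[symmetric] blinfun_power_scaleR
    by (simp add: summable_sums)
qed

lemma norm_op_exp_scaleR_le:
  fixes A :: "'h::banach \<Rightarrow>\<^sub>L 'h"
  shows "norm (op_exp (t *\<^sub>R A)) \<le> exp (\<bar>t\<bar> * norm A)"
proof -
  have "norm ((t ^ n / fact n) *\<^sub>R blinfun_power A n) \<le> (\<bar>t\<bar> * norm A) ^ n /\<^sub>R fact n" for n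
    using mult_left_mono[OF norm_blinfun_power_le, of "\<bar>t\<bar> ^ n / fact n" A n]
    by (simp add: power_abs power_mult_distrib field_simps)
  from norm_suminf_le[OF this summable_exp_generic]
  show ?thesis using op_exp_scaleR_sums[of t A] by (simp add: sums_iff exp_def)
qed

lemma measurable_blinfun_apply[measurable]:
  fixes P :: "'a::{real_normed_vector,second_countable_topology} \<Rightarrow>\<^sub>L 'b::{real_normed_vector,second_countable_topology}"
  assumes [measurable]: "z \<in> borel_measurable M"
  shows "(\<lambda>x. blinfun_apply P (z x)) \<in> borel_measurable M"
  using borel_measurable_continuous_onI[OF linear_continuous_on[OF blinfun.bounded_linear_right]]
  by measurable

definition exp_kernel :: "'h::{real_inner,banach} \<Rightarrow> ('h \<Rightarrow>\<^sub>L 'h) \<Rightarrow> 'h \<Rightarrow> real \<Rightarrow> real" where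
  "exp_kernel g A z t = g \<bullet> blinfun_apply (op_exp (t *\<^sub>R A)) z"

definition exp_kernel_coeff :: "'h::{real_inner,banach} \<Rightarrow> ('h \<Rightarrow>\<^sub>L 'h) \<Rightarrow> 'h \<Rightarrow> nat \<Rightarrow> real" where
  "exp_kernel_coeff g A z n = (g \<bullet> blinfun_apply (blinfun_power A n) z) / fact n"

lemma exp_kernel_sums: "(\<lambda>n. exp_kernel_coeff g A z n * t ^ n) sums exp_kernel g A z t"
proof -
  have "bounded_linear (\<lambda>B. g \<bullet> blinfun_apply B z)"
    by (rule bounded_linear_compose[OF bounded_linear_inner_right blinfun.bounded_linear_left])
  from bounded_linear.sums[OF this op_exp_scaleR_sums]
  show ?thesis
    by (simp add: exp_kernel_def exp_kernel_coeff_def blinfun.scaleR_left mult.commute)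
qed

lemma diffs_exp_kernel_coeff: "diffs (exp_kernel_coeff g A z) = exp_kernel_coeff g A (blinfun_apply A z)"
  by (rule ext) (simp add: diffs_def exp_kernel_coeff_def blinfun_power_Suc_apply del: of_nat_Suc)

lemma exp_kernel_has_real_derivative:
  "(exp_kernel g A z has_real_derivative exp_kernel g A (blinfun_apply A z) t) (at t)"
proof -
  have "exp_kernel g A z = (\<lambda>t. \<Sum>n. exp_kernel_coeff g A z n * t ^ n)" for z
    using exp_kernel_sums by (metis sums_unique)
  then show ?thesis
    using termdiffs_strong_converges_everywhere[of "exp_kernel_coeff g A z" t]
    by (metis diffs_exp_kernel_coeff exp_kernel_sums sums_summable)
qed

lemma continuous_on_exp_kernel[continuous_intros]:
  "continuous_on S f \<Longrightarrow> continuous_on S (\<lambda>x. exp_kernel g A z (f x))"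
  using continuous_on_compose2[of UNIV "exp_kernel g A z" S f]
    DERIV_isCont[OF exp_kernel_has_real_derivative] continuous_at_imp_continuous_on
  by blast

lemma exp_kernel_0: "exp_kernel g A z 0 = g \<bullet> z"
  using sums_unique2[OF exp_kernel_sums[of g A z 0] powser_sums_zero]
  by (simp add: exp_kernel_coeff_def blinfun_power_def)

lemma exp_kernel_add: "exp_kernel g A (x + y) t = exp_kernel g A x t + exp_kernel g A y t"
  by (simp add: exp_kernel_def blinfun.add_right inner_add_right)

lemma exp_kernel_scaleR: "exp_kernel g A (c *\<^sub>R x) t = c * exp_kernel g A x t"
  by (simp add: exp_kernel_def blinfun.scaleR_right)

lemma bounded_linear_exp_kernel: "bounded_linear (\<lambda>z. exp_kernel g A z t)"
  unfolding exp_kernel_def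
  by (rule bounded_linear_compose[OF bounded_linear_inner_right blinfun.bounded_linear_right])

lemma abs_exp_kernel_le: "\<bar>exp_kernel g A z t\<bar> \<le> norm g * norm z * exp (\<bar>t\<bar> * norm A)"
proof -
  have "\<bar>exp_kernel g A z t\<bar> \<le> norm g * (norm (op_exp (t *\<^sub>R A)) * norm z)"
    unfolding exp_kernel_def
    by (rule order_trans[OF Cauchy_Schwarz_ineq2 mult_left_mono[OF norm_blinfun]]) simp
  also have "\<dots> \<le> norm g * (exp (\<bar>t\<bar> * norm A) * norm z)"
    by (intro mult_left_mono mult_right_mono norm_op_exp_scaleR_le) auto
  finally show ?thesis by (simp add: mult_ac)
qed

lemma exp_kernel_reflected_has_real_derivative:
  "((\<lambda>s. exp_kernel g A z (t - s)) has_real_derivative - exp_kernel g A (blinfun_apply A z) (t - s)) (at s)"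
proof -
  have "((\<lambda>s. t - s) has_real_derivative -1) (at s)" by (auto intro!: derivative_eq_intros)
  from DERIV_chain2[OF exp_kernel_has_real_derivative this] show ?thesis by simp
qed

lemma set_integral_exp_kernel_reflected:
  assumes "r \<le> t"
  shows "(LINT s:{r..t}|lborel. exp_kernel g A (blinfun_apply A z) (t - s)) = exp_kernel g A z (t - r) - g \<bullet> z"
proof -
  have "((\<lambda>s. - exp_kernel g A z (t - s)) has_real_derivative exp_kernel g A (blinfun_apply A z) (t - s)) (at s)" for s
    using DERIV_minus[OF exp_kernel_reflected_has_real_derivative] by simp
  then have "((\<lambda>s. exp_kernel g A (blinfun_apply A z) (t - s)) has_integral
      (- exp_kernel g A z (t - t) - - exp_kernel g A z (t - r))) {r..t}"
    using assms
    by (intro fundamental_theorem_of_calculus)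
       (auto simp: has_real_derivative_iff_has_vector_derivative[symmetric] intro: DERIV_subset)
  moreover have "continuous_on {r..t} (\<lambda>s. exp_kernel g A (blinfun_apply A z) (t - s))"
    by (intro continuous_intros)
  ultimately show ?thesis
    by (simp add: set_borel_integral_eq_integral(2)[OF borel_integrable_atLeastAtMost'] integral_unique exp_kernel_0)
qed

lemma measurable_exp_kernel[measurable]:
  fixes A :: "'h::{real_inner,banach,second_countable_topology} \<Rightarrow>\<^sub>L 'h"
  assumes [measurable]: "z \<in> borel_measurable M" "t \<in> borel_measurable M"
  shows "(\<lambda>x. exp_kernel g A (z x) (t x)) \<in> borel_measurable M"
proof (rule borel_measurable_LIMSEQ_real)
  show "(\<lambda>n. \<Sum>i<n. exp_kernel_coeff g A (z x) i * t x ^ i) \<longlonglongrightarrow> exp_kernel g A (z x) (t x)" for x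
    using exp_kernel_sums sums_def by blast
  show "(\<lambda>x. \<Sum>i<n. exp_kernel_coeff g A (z x) i * t x ^ i) \<in> borel_measurable M" for n
    unfolding exp_kernel_coeff_def by measurable
qed

lemma fine_partition_exists:
  fixes a b d :: real
  assumes "a \<le> b" "d > 0"
  obtains p n where "p 0 = a" "p n = b" "\<forall>i<n. p i < p (Suc i) \<and> p (Suc i) - p i < d"
proof (cases "a = b")
  case True
  then show ?thesis by (intro that[of "\<lambda>_. a" 0]) auto
next
  case False
  obtain N :: nat where N: "(b - a) / d < N" using reals_Archimedean2 by blast
  have "(b - a) / d > 0" using False assms by simp
  with N have "N > 0" by simp
  define h where "h = (b - a) / N"
  have "h > 0" "h < d"
    using False assms N \<open>N > 0\<close> by (auto simp: h_def divide_less_eq mult.commute)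
  moreover have "a + real N * h = b" using \<open>N > 0\<close> by (simp add: h_def)
  ultimately show ?thesis
    by (intro that[of "\<lambda>i. a + real i * h" N]) (auto simp: distrib_right)
qed

lemma has_stoch_integral_unique:
  fixes f :: "real \<Rightarrow> 'b::real_normed_vector"
  assumes I: "has_stoch_integral f w a b I" and J: "has_stoch_integral f w a b J" and "a \<le> b"
  shows "I = J"
proof -
  have "norm (I - J) \<le> 0 + e" if "e > 0" for e
  proof -
    have "e / 2 > 0" using \<open>e > 0\<close> by simp
    obtain d1 where "d1 > 0" and d1: "\<forall>p n. p 0 = a \<and> p n = b \<and>
        (\<forall>i<n. p i < p (Suc i) \<and> p (Suc i) - p i < d1) \<longrightarrow>
        norm ((\<Sum>i<n. (w (p (Suc i)) - w (p i)) *\<^sub>R f (p i)) - I) < e / 2"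
      using I \<open>e / 2 > 0\<close> unfolding has_stoch_integral_def by blast
    obtain d2 where "d2 > 0" and d2: "\<forall>p n. p 0 = a \<and> p n = b \<and>
        (\<forall>i<n. p i < p (Suc i) \<and> p (Suc i) - p i < d2) \<longrightarrow>
        norm ((\<Sum>i<n. (w (p (Suc i)) - w (p i)) *\<^sub>R f (p i)) - J) < e / 2"
      using J \<open>e / 2 > 0\<close> unfolding has_stoch_integral_def by blast
    obtain p n where p: "p 0 = a" "p n = b" "\<forall>i<n. p i < p (Suc i) \<and> p (Suc i) - p i < min d1 d2"
      using fine_partition_exists[OF \<open>a \<le> b\<close>, of "min d1 d2"] \<open>d1 > 0\<close> \<open>d2 > 0\<close> by auto
    define S where "S = (\<Sum>i<n. (w (p (Suc i)) - w (p i)) *\<^sub>R f (p i))"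
    have "norm (S - I) < e / 2" "norm (S - J) < e / 2"
      using d1 d2 p unfolding S_def by auto
    then show ?thesis
      using norm_triangle_ineq4[of "S - J" "S - I"] by simp
  qed
  then show ?thesis using field_le_epsilon[of "norm (I - J)" 0] by simp
qed

lemma has_stoch_integral_const: "has_stoch_integral (\<lambda>s. c) w a b ((w b - w a) *\<^sub>R c)"
  unfolding has_stoch_integral_def
proof (intro allI impI exI[of _ 1] conjI)
  fix e :: real and p :: "nat \<Rightarrow> real" and n
  assume "e > 0" and p: "p 0 = a \<and> p n = b \<and> (\<forall>i<n. p i < p (Suc i) \<and> p (Suc i) - p i < 1)"
  have "(\<Sum>i<n. (w (p (Suc i)) - w (p i)) *\<^sub>R c) = (w b - w a) *\<^sub>R c"
    using sum_lessThan_telescope[of "\<lambda>i. w (p i)" n] p by (simp add: scaleR_sum_left[symmetric])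
  then show "norm ((\<Sum>i<n. (w (p (Suc i)) - w (p i)) *\<^sub>R c) - (w b - w a) *\<^sub>R c) < e"
    using \<open>e > 0\<close> by simp
qed simp

lemma has_stoch_integral_const_iff:
  "a \<le> b \<Longrightarrow> has_stoch_integral (\<lambda>s. c) w a b J \<longleftrightarrow> J = (w b - w a) *\<^sub>R c"
  using has_stoch_integral_unique has_stoch_integral_const by blast

lemma partition_mono:
  fixes p :: "nat \<Rightarrow> real"
  assumes "\<forall>i<n. p i < p (Suc i)" "j \<le> k" "k \<le> n"
  shows "p j \<le> p k"
  using assms by (intro lift_Suc_mono_le_ivl[of "{..<n}" p j k]) (auto intro: less_imp_le)

lemma integral_partition_sum:
  fixes h :: "real \<Rightarrow> real"
  assumes "p 0 = a" "p n = b" "\<forall>i<n. p i < p (Suc i)" "continuous_on {a..b} h"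
  shows "integral {a..b} h = (\<Sum>i<n. integral {p i..p (Suc i)} h)"
proof -
  have "integral {p 0..p m} h = (\<Sum>i<m. integral {p i..p (Suc i)} h)" if "m \<le> n" for m
    using that
  proof (induction m)
    case (Suc m)
    have "{p 0..p (Suc m)} \<subseteq> {a..b}"
      using partition_mono[OF assms(3), of 0 "Suc m"] partition_mono[OF assms(3), of "Suc m" n] Suc.prems assms(1,2)
      by auto
    then have "h integrable_on {p 0..p (Suc m)}"
      by (meson assms(4) continuous_on_subset integrable_continuous_interval)
    then have "integral {p 0..p m} h + integral {p m..p (Suc m)} h = integral {p 0..p (Suc m)} h"
      using partition_mono[OF assms(3), of 0 m] partition_mono[OF assms(3), of m "Suc m"] Suc.prems
      by (intro Henstock_Kurzweil_Integration.integral_combine) auto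
    then show ?case using Suc by simp
  qed simp
  then show ?thesis using assms by (metis order_refl)
qed

lemma left_point_sum_by_parts:
  fixes f f' w :: "real \<Rightarrow> real"
  assumes p0: "p 0 = a" and pn: "p n = b" and pinc: "\<forall>i<n. p i < p (Suc i)"
    and wc: "continuous_on {a..b} w"
    and fd: "\<And>s. (f has_real_derivative f' s) (at s)" and f'c: "continuous_on {a..b} f'"
  shows "(\<Sum>i<n. (w (p (Suc i)) - w (p i)) * f (p i)) - (w b * f b - w a * f a - integral {a..b} (\<lambda>s. w s * f' s))
    = (\<Sum>i<n. integral {p i..p (Suc i)} (\<lambda>s. (w s - w (p (Suc i))) * f' s))"
proof -
  have piece: "integral {p i..p (Suc i)} (\<lambda>s. (w s - w (p (Suc i))) * f' s)
      = integral {p i..p (Suc i)} (\<lambda>s. w s * f' s) - w (p (Suc i)) * (f (p (Suc i)) - f (p i))"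
    if i: "i < n" for i
  proof -
    have sub: "{p i..p (Suc i)} \<subseteq> {a..b}"
      using partition_mono[OF pinc, of 0 i] partition_mono[OF pinc, of "Suc i" n] i p0 pn by auto
    have ftc: "(f' has_integral (f (p (Suc i)) - f (p i))) {p i..p (Suc i)}"
      using pinc i fd
      by (intro fundamental_theorem_of_calculus)
         (auto simp: has_real_derivative_iff_has_vector_derivative[symmetric] intro: DERIV_subset)
    have "(\<lambda>s. w s * f' s) integrable_on {p i..p (Suc i)}"
      by (intro integrable_continuous_interval continuous_on_subset[OF _ sub] continuous_intros wc f'c)
    moreover have "(\<lambda>s. w (p (Suc i)) * f' s) integrable_on {p i..p (Suc i)}"
      using integrable_on_cmult_left[OF has_integral_integrable[OF ftc]] by simp
    ultimately have "integral {p i..p (Suc i)} (\<lambda>s. w s * f' s - w (p (Suc i)) * f' s)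
        = integral {p i..p (Suc i)} (\<lambda>s. w s * f' s) - w (p (Suc i)) * integral {p i..p (Suc i)} f'"
      by (simp add: integral_diff)
    then show ?thesis
      using ftc by (simp add: left_diff_distrib integral_unique)
  qed
  have "integral {a..b} (\<lambda>s. w s * f' s) = (\<Sum>i<n. integral {p i..p (Suc i)} (\<lambda>s. w s * f' s))"
    by (intro integral_partition_sum[OF p0 pn pinc] continuous_intros wc f'c)
  moreover have "w b * f b - w a * f a = (\<Sum>i<n. w (p (Suc i)) * f (p (Suc i)) - w (p i) * f (p i))"
    using sum_lessThan_telescope[of "\<lambda>i. w (p i) * f (p i)" n] p0 pn by simp
  ultimately have "(\<Sum>i<n. (w (p (Suc i)) - w (p i)) * f (p i)) - (w b * f b - w a * f a - integral {a..b} (\<lambda>s. w s * f' s))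
      = (\<Sum>i<n. (w (p (Suc i)) - w (p i)) * f (p i)
           - ((w (p (Suc i)) * f (p (Suc i)) - w (p i) * f (p i)) - integral {p i..p (Suc i)} (\<lambda>s. w s * f' s)))"
    by (simp add: sum_subtractf)
  also have "\<dots> = (\<Sum>i<n. integral {p i..p (Suc i)} (\<lambda>s. (w s - w (p (Suc i))) * f' s))"
    by (intro sum.cong refl) (simp only: lessThan_iff piece, simp add: algebra_simps)
  finally show ?thesis .
qed

lemma left_point_sum_error_le:
  fixes f f' w :: "real \<Rightarrow> real"
  assumes p0: "p 0 = a" and pn: "p n = b" and fine: "\<forall>i<n. p i < p (Suc i) \<and> p (Suc i) - p i < d"
    and wc: "continuous_on {a..b} w"
    and fd: "\<And>s. (f has_real_derivative f' s) (at s)" and f'c: "continuous_on {a..b} f'"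
    and B: "\<And>s. s \<in> {a..b} \<Longrightarrow> \<bar>f' s\<bar> \<le> B"
    and osc: "\<And>x y. x \<in> {a..b} \<Longrightarrow> y \<in> {a..b} \<Longrightarrow> \<bar>x - y\<bar> < d \<Longrightarrow> \<bar>w x - w y\<bar> \<le> \<epsilon>"
  shows "\<bar>(\<Sum>i<n. (w (p (Suc i)) - w (p i)) * f (p i)) - (w b * f b - w a * f a - integral {a..b} (\<lambda>s. w s * f' s))\<bar>
    \<le> \<epsilon> * B * (b - a)"
proof -
  have pinc: "\<forall>i<n. p i < p (Suc i)" using fine by auto
  have bound: "\<bar>integral {p i..p (Suc i)} (\<lambda>s. (w s - w (p (Suc i))) * f' s)\<bar> \<le> \<epsilon> * B * (p (Suc i) - p i)"
    if i: "i < n" for i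
  proof -
    have sub: "{p i..p (Suc i)} \<subseteq> {a..b}"
      using partition_mono[OF pinc, of 0 i] partition_mono[OF pinc, of "Suc i" n] i p0 pn by auto
    have "norm (integral {p i..p (Suc i)} (\<lambda>s. (w s - w (p (Suc i))) * f' s)) \<le> \<epsilon> * B * (p (Suc i) - p i)"
    proof (rule integral_bound)
      show "p i \<le> p (Suc i)" using pinc i by (simp add: less_imp_le)
      show "continuous_on {p i..p (Suc i)} (\<lambda>s. (w s - w (p (Suc i))) * f' s)"
        by (intro continuous_on_subset[OF _ sub] continuous_intros wc f'c)
      fix s assume s: "s \<in> {p i..p (Suc i)}"
      then have "\<bar>w s - w (p (Suc i))\<bar> \<le> \<epsilon>"
        using osc[of s "p (Suc i)"] sub fine i by auto
      then show "norm ((w s - w (p (Suc i))) * f' s) \<le> \<epsilon> * B"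
        using B[of s] s sub by (auto simp: abs_mult intro: mult_mono)
    qed
    then show ?thesis by simp
  qed
  have "\<bar>\<Sum>i<n. integral {p i..p (Suc i)} (\<lambda>s. (w s - w (p (Suc i))) * f' s)\<bar> \<le> (\<Sum>i<n. \<epsilon> * B * (p (Suc i) - p i))"
    by (rule order_trans[OF sum_abs sum_mono]) (simp add: bound)
  also have "\<dots> = \<epsilon> * B * (b - a)"
    using sum_lessThan_telescope[of p n] p0 pn by (simp add: sum_distrib_left[symmetric])
  finally show ?thesis
    unfolding left_point_sum_by_parts[OF p0 pn pinc wc fd f'c] .
qed

lemma has_stoch_integral_by_parts:
  fixes f f' w :: "real \<Rightarrow> real"
  assumes ab: "a \<le> b" and wc: "continuous_on {a..b} w"
    and fd: "\<And>s. (f has_real_derivative f' s) (at s)" and f'c: "continuous_on {a..b} f'"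
  shows "has_stoch_integral f w a b (w b * f b - w a * f a - integral {a..b} (\<lambda>s. w s * f' s))"
  unfolding has_stoch_integral_def
proof (intro allI impI)
  fix e :: real assume "e > 0"
  obtain B where "B > 0" and B: "\<And>s. s \<in> {a..b} \<Longrightarrow> \<bar>f' s\<bar> \<le> B"
    using compact_imp_bounded[OF compact_continuous_image[OF f'c compact_Icc]]
    unfolding bounded_pos by auto
  define \<epsilon> where "\<epsilon> = e / (B * (b - a) + 1)"
  have "B * (b - a) + 1 > 0" using \<open>B > 0\<close> ab by (simp add: add_nonneg_pos)
  then have "\<epsilon> > 0" "\<epsilon> * B * (b - a) < e"
    using \<open>e > 0\<close> by (auto simp: \<epsilon>_def field_simps)
  obtain d where "d > 0" and d: "\<And>x y. x \<in> {a..b} \<Longrightarrow> y \<in> {a..b} \<Longrightarrow> dist x y < d \<Longrightarrow> dist (w x) (w y) < \<epsilon>"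
    using compact_uniformly_continuous[OF wc compact_Icc] \<open>\<epsilon> > 0\<close>
    unfolding uniformly_continuous_on_def by metis
  have osc: "\<bar>w x - w y\<bar> \<le> \<epsilon>" if "x \<in> {a..b}" "y \<in> {a..b}" "\<bar>x - y\<bar> < d" for x y
    using d[OF that[unfolded dist_real_def[symmetric]]] by (simp add: dist_real_def)
  show "\<exists>d>0. \<forall>p n. p 0 = a \<and> p n = b \<and> (\<forall>i<n. p i < p (Suc i) \<and> p (Suc i) - p i < d) \<longrightarrow>
      norm ((\<Sum>i<n. (w (p (Suc i)) - w (p i)) *\<^sub>R f (p i)) - (w b * f b - w a * f a - integral {a..b} (\<lambda>s. w s * f' s))) < e"
  proof (intro exI[of _ d] conjI allI impI \<open>d > 0\<close>, elim conjE)
    fix p :: "nat \<Rightarrow> real" and n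
    assume "p 0 = a" "p n = b" "\<forall>i<n. p i < p (Suc i) \<and> p (Suc i) - p i < d"
    from left_point_sum_error_le[OF this wc fd f'c B osc] \<open>\<epsilon> * B * (b - a) < e\<close>
    show "norm ((\<Sum>i<n. (w (p (Suc i)) - w (p i)) *\<^sub>R f (p i)) - (w b * f b - w a * f a - integral {a..b} (\<lambda>s. w s * f' s))) < e"
      by simp
  qed
qed

lemma has_stoch_integral_exp_kernel:
  assumes "0 \<le> t" "continuous_on {0..t} W" "W 0 = 0"
  shows "has_stoch_integral (\<lambda>s. exp_kernel g A z (t - s)) W 0 t
    ((g \<bullet> z) * W t + integral {0..t} (\<lambda>s. W s * exp_kernel g A (blinfun_apply A z) (t - s)))"
proof -
  have "continuous_on {0..t} (\<lambda>s. - exp_kernel g A (blinfun_apply A z) (t - s))"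
    by (intro continuous_intros)
  from has_stoch_integral_by_parts[OF assms(1,2) exp_kernel_reflected_has_real_derivative this]
  show ?thesis using assms(3) by (simp add: exp_kernel_0 integral_neg mult.commute)
qed

lemma set_integrable_bounded_linear:
  fixes f :: "'a \<Rightarrow> 'b::{banach,second_countable_topology}"
    and T :: "'b \<Rightarrow> 'c::{banach,second_countable_topology}"
  assumes "bounded_linear T" "set_integrable M S f"
  shows "set_integrable M S (\<lambda>x. T (f x))"
proof -
  interpret bounded_linear T by fact
  show ?thesis
    using integrable_bounded_linear[OF assms(1), of M "\<lambda>x. indicator S x *\<^sub>R f x"] assms
    by (simp add: set_integrable_def scaleR)
qed

lemma set_integral_bounded_linear:
  fixes f :: "'a \<Rightarrow> 'b::{banach,second_countable_topology}"
    and T :: "'b \<Rightarrow> 'c::{banach,second_countable_topology}"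
  assumes "bounded_linear T" "set_integrable M S f"
  shows "T (LINT x:S|M. f x) = (LINT x:S|M. T (f x))"
proof -
  interpret bounded_linear T by fact
  show ?thesis
    using integral_bounded_linear[OF assms(1), of M "\<lambda>x. indicator S x *\<^sub>R f x"] assms
    by (simp add: set_integrable_def set_lebesgue_integral_def scaleR)
qed

lemma abs_exp_kernel_le_uniform:
  assumes "\<bar>\<tau>\<bar> \<le> T"
  shows "\<bar>exp_kernel g A z \<tau>\<bar> \<le> norm g * norm z * exp (T * norm A)"
proof -
  have "exp (\<bar>\<tau>\<bar> * norm A) \<le> exp (T * norm A)"
    using assms by (simp add: mult_right_mono)
  then show ?thesis
    by (rule order_trans[OF abs_exp_kernel_le mult_left_mono]) simp
qed

lemma abs_exp_kernel_blinfun_le: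
  assumes "\<bar>\<tau>\<bar> \<le> T"
  shows "\<bar>exp_kernel g A (blinfun_apply P z) \<tau>\<bar> \<le> norm g * norm P * exp (T * norm A) * norm z"
proof -
  have "\<bar>exp_kernel g A (blinfun_apply P z) \<tau>\<bar> \<le> norm g * norm (blinfun_apply P z) * exp (T * norm A)"
    using assms by (rule abs_exp_kernel_le_uniform)
  also have "\<dots> \<le> norm g * (norm P * norm z) * exp (T * norm A)"
    by (intro mult_right_mono mult_left_mono norm_blinfun) auto
  finally show ?thesis by (simp add: mult_ac)
qed

lemma set_integrable_exp_kernel_convolution:
  fixes A P :: "'h::{real_inner,banach,second_countable_topology} \<Rightarrow>\<^sub>L 'h"
  assumes "0 \<le> t" and G: "set_integrable lborel {0..t} G"
  shows "set_integrable lborel {0..t} (\<lambda>s. exp_kernel g A (blinfun_apply P (G s)) (t - s))"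
proof (rule set_integrable_bound)
  define c where "c = norm g * norm P * exp (t * norm A)"
  show "set_integrable lborel {0..t} (\<lambda>s. c *\<^sub>R G s)" using G by simp
  have [measurable]: "(\<lambda>s. indicator {0..t} s *\<^sub>R G s) \<in> borel_measurable lborel"
    using G unfolding set_integrable_def by (rule borel_measurable_integrable)
  have "(\<lambda>s. indicator {0..t} s *\<^sub>R exp_kernel g A (blinfun_apply P (G s)) (t - s)) =
        (\<lambda>s. exp_kernel g A (blinfun_apply P (indicator {0..t} s *\<^sub>R G s)) (t - s))"
    by (simp add: indicator_def exp_kernel_scaleR blinfun.scaleR_right)
  then show "set_borel_measurable lborel {0..t} (\<lambda>s. exp_kernel g A (blinfun_apply P (G s)) (t - s))"
    unfolding set_borel_measurable_def by simp
  show "AE s in lborel. s \<in> {0..t} \<longrightarrow> norm (exp_kernel g A (blinfun_apply P (G s)) (t - s)) \<le> norm (c *\<^sub>R G s)"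
    using abs_exp_kernel_blinfun_le[of "t - _" t g A P] by (auto simp: c_def)
qed

lemma set_integral_exp_kernel_abs_le:
  fixes A :: "'h::{real_inner,banach,second_countable_topology} \<Rightarrow>\<^sub>L 'h" and D :: "real \<Rightarrow> real"
  assumes "0 \<le> t" "t \<le> T" and D: "set_integrable lborel {0..t} D"
  shows "set_integrable lborel {0..t} (\<lambda>s. exp_kernel g A z (t - s) * D s)"
    and "\<bar>LINT s:{0..t}|lborel. exp_kernel g A z (t - s) * D s\<bar>
      \<le> norm g * norm z * exp (T * norm A) * (LINT s:{0..t}|lborel. \<bar>D s\<bar>)"
proof -
  have "set_integrable lborel {0..t} (\<lambda>s. D s *\<^sub>R z)"
    using D by (rule set_integrable_scaleR_left)
  from set_integrable_exp_kernel_convolution[OF assms(1) this, of g A id_blinfun]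
  show int: "set_integrable lborel {0..t} (\<lambda>s. exp_kernel g A z (t - s) * D s)"
    by (simp add: exp_kernel_scaleR mult.commute)
  have "\<bar>LINT s:{0..t}|lborel. exp_kernel g A z (t - s) * D s\<bar>
      \<le> (LINT s:{0..t}|lborel. \<bar>exp_kernel g A z (t - s) * D s\<bar>)"
    using set_integral_norm_bound[OF int] by simp
  also have "\<dots> \<le> (LINT s:{0..t}|lborel. norm g * norm z * exp (T * norm A) * \<bar>D s\<bar>)"
  proof (rule set_integral_mono)
    show "set_integrable lborel {0..t} (\<lambda>s. \<bar>exp_kernel g A z (t - s) * D s\<bar>)"
      using int by (rule set_integrable_abs)
    show "set_integrable lborel {0..t} (\<lambda>s. norm g * norm z * exp (T * norm A) * \<bar>D s\<bar>)"
      using set_integrable_abs[OF D] by (rule set_integrable_mult_right)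
    fix s assume "s \<in> {0..t}"
    then have "\<bar>exp_kernel g A z (t - s)\<bar> \<le> norm g * norm z * exp (T * norm A)"
      using assms(2) by (intro abs_exp_kernel_le_uniform) auto
    then show "\<bar>exp_kernel g A z (t - s) * D s\<bar> \<le> norm g * norm z * exp (T * norm A) * \<bar>D s\<bar>"
      by (simp add: abs_mult mult_right_mono)
  qed
  finally show "\<bar>LINT s:{0..t}|lborel. exp_kernel g A z (t - s) * D s\<bar>
      \<le> norm g * norm z * exp (T * norm A) * (LINT s:{0..t}|lborel. \<bar>D s\<bar>)"
    by simp
qed

lemma integrable_exp_kernel_triangle:
  fixes A P :: "'h::{real_inner,banach,second_countable_topology} \<Rightarrow>\<^sub>L 'h" and F :: "real \<Rightarrow> 'h"
  assumes F: "integrable lborel F"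
  shows "integrable (lborel \<Otimes>\<^sub>M lborel) (\<lambda>(s, r).
    if 0 \<le> r \<and> r \<le> s \<and> s \<le> t then exp_kernel g A (blinfun_apply P (F r)) (t - s) else 0)"
proof (rule Bochner_Integration.integrable_bound)
  have [measurable]: "F \<in> borel_measurable lborel" using F by (rule borel_measurable_integrable)
  define c where "c = norm g * norm P * exp (t * norm A)"
  define b where "b = (\<lambda>(s::real, r::real). indicator {0..t} s * (c * norm (F r)))"
  have [measurable]: "b \<in> borel_measurable (lborel \<Otimes>\<^sub>M lborel)"
    unfolding b_def by measurable
  show "integrable (lborel \<Otimes>\<^sub>M lborel) b"
  proof (rule lborel_pair.Fubini_integrable)
    have "(\<lambda>s. \<integral>r. norm (b (s, r)) \<partial>lborel) = (\<lambda>s. indicator {0..t} s *\<^sub>R (c * (\<integral>r. norm (F r) \<partial>lborel)))"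
      by (simp add: b_def c_def abs_mult)
    then show "integrable lborel (\<lambda>s. \<integral>r. norm (b (s, r)) \<partial>lborel)"
      using borel_integrable_atLeastAtMost'[of 0 t "\<lambda>_. c * (\<integral>r. norm (F r) \<partial>lborel)"]
      by (simp add: set_integrable_def)
    show "AE s in lborel. integrable lborel (\<lambda>r. b (s, r))"
      using F by (simp add: b_def)
  qed simp
  show "AE x in lborel \<Otimes>\<^sub>M lborel. norm ((\<lambda>(s, r).
      if 0 \<le> r \<and> r \<le> s \<and> s \<le> t then exp_kernel g A (blinfun_apply P (F r)) (t - s) else 0) x) \<le> norm (b x)"
    using abs_exp_kernel_blinfun_le[of "t - _" t g A P]
    by (intro AE_I2) (auto simp: b_def c_def)
  show "(\<lambda>(s, r). if 0 \<le> r \<and> r \<le> s \<and> s \<le> t then exp_kernel g A (blinfun_apply P (F r)) (t - s) else 0)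
      \<in> borel_measurable (lborel \<Otimes>\<^sub>M lborel)"
    by measurable
qed

lemma exp_kernel_convolution_primitive:
  fixes A :: "'h::{real_inner,banach,second_countable_topology} \<Rightarrow>\<^sub>L 'h" and F :: "real \<Rightarrow> 'h"
  assumes t: "0 \<le> t" and F: "set_integrable lborel {0..t} F"
  shows "(LINT s:{0..t}|lborel. exp_kernel g A (blinfun_apply A (LINT r:{0..s}|lborel. F r)) (t - s))
    = (LINT r:{0..t}|lborel. exp_kernel g A (F r) (t - r)) - g \<bullet> (LINT r:{0..t}|lborel. F r)"
proof -
  let ?k = "\<lambda>z s. exp_kernel g A (blinfun_apply A z) (t - s)"
  define F' where "F' = (\<lambda>r. indicator {0..t} r *\<^sub>R F r)"
  have "integrable lborel F'" using F unfolding set_integrable_def F'_def .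
  define h where "h = (\<lambda>(s::real, r::real). if 0 \<le> r \<and> r \<le> s \<and> s \<le> t then ?k (F' r) s else 0)"
  have "integrable (lborel \<Otimes>\<^sub>M lborel) h"
    unfolding h_def by (rule integrable_exp_kernel_triangle) fact
  then have fubini: "(\<integral>s. (\<integral>r. h (s, r) \<partial>lborel) \<partial>lborel) = (\<integral>r. (\<integral>s. h (s, r) \<partial>lborel) \<partial>lborel)"
    using lborel_pair.Fubini_integral[of "\<lambda>s r. h (s, r)"] by simp
  have inner_r: "(\<integral>r. h (s, r) \<partial>lborel) = indicator {0..t} s * ?k (LINT r:{0..s}|lborel. F r) s" for s
  proof (cases "s \<in> {0..t}")
    case True
    have "bounded_linear (\<lambda>z. ?k z s)"
      by (rule bounded_linear_compose[OF bounded_linear_exp_kernel blinfun.bounded_linear_right])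
    moreover have "set_integrable lborel {0..s} F"
      by (rule set_integrable_subset[OF F]) (use True in auto)
    ultimately have "?k (LINT r:{0..s}|lborel. F r) s = (LINT r:{0..s}|lborel. ?k (F r) s)"
      by (rule set_integral_bounded_linear)
    also have "\<dots> = (\<integral>r. h (s, r) \<partial>lborel)"
      unfolding set_lebesgue_integral_def
      by (rule Bochner_Integration.integral_cong) (use True in \<open>auto simp: h_def F'_def indicator_def\<close>)
    finally show ?thesis using True by simp
  next
    case False
    then have "(\<lambda>r. h (s, r)) = (\<lambda>r. 0)" by (auto simp: h_def)
    then show ?thesis using False by simp
  qed
  have inner_s: "(\<integral>s. h (s, r) \<partial>lborel) = indicator {0..t} r * (exp_kernel g A (F r) (t - r) - g \<bullet> F r)" for r
  proof (cases "r \<in> {0..t}")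
    case True
    have "(\<integral>s. h (s, r) \<partial>lborel) = (LINT s:{r..t}|lborel. ?k (F r) s)"
      unfolding set_lebesgue_integral_def
      by (intro Bochner_Integration.integral_cong) (use True in \<open>auto simp: h_def F'_def indicator_def\<close>)
    then show ?thesis using True by (simp add: set_integral_exp_kernel_reflected)
  next
    case False
    then have "(\<lambda>s. h (s, r)) = (\<lambda>s. 0)" by (auto simp: h_def)
    then show ?thesis using False by simp
  qed
  have "set_integrable lborel {0..t} (\<lambda>r. exp_kernel g A (F r) (t - r))"
    using set_integrable_exp_kernel_convolution[OF t F, of g A id_blinfun] by simp
  moreover have "set_integrable lborel {0..t} (\<lambda>r. g \<bullet> F r)"
    by (rule set_integrable_bounded_linear[OF bounded_linear_inner_right F])
  moreover have "(LINT s:{0..t}|lborel. ?k (LINT r:{0..s}|lborel. F r) s)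
      = (LINT r:{0..t}|lborel. exp_kernel g A (F r) (t - r) - g \<bullet> F r)"
    using fubini by (simp add: inner_r inner_s set_lebesgue_integral_def)
  ultimately show ?thesis
    by (simp add: set_integral_diff set_integral_bounded_linear[OF bounded_linear_inner_right F])
qed

lemma integral_gronwall_iterate:
  fixes D :: "real \<Rightarrow> real"
  assumes D: "set_integrable lborel {0..T} D" and "0 \<le> L"
    and bound: "\<And>t. t \<in> {0..T} \<Longrightarrow> \<bar>D t\<bar> \<le> L * (LINT s:{0..t}|lborel. \<bar>D s\<bar>)"
    and t: "t \<in> {0..T}"
  shows "\<bar>D t\<bar> \<le> L * (LINT s:{0..T}|lborel. \<bar>D s\<bar>) * ((L * t) ^ n / fact n)"
proof -
  define M where "M = (LINT s:{0..T}|lborel. \<bar>D s\<bar>)"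
  have int: "set_integrable lborel {0..t} (\<lambda>s. \<bar>D s\<bar>)" if "t \<le> T" for t
    using set_integrable_subset[OF set_integrable_abs[OF D]] that by auto
  from t show ?thesis
    unfolding M_def[symmetric]
  proof (induction n arbitrary: t)
    case 0
    have "(LINT s:{0..t}|lborel. \<bar>D s\<bar>) \<le> M"
      unfolding M_def set_lebesgue_integral_def
      using int[of t] int[of T] 0
      by (intro integral_mono) (auto simp: set_integrable_def indicator_def)
    then have "L * (LINT s:{0..t}|lborel. \<bar>D s\<bar>) \<le> L * M"
      using \<open>0 \<le> L\<close> by (rule mult_left_mono)
    then show ?case using bound[OF 0] by simp
  next
    case (Suc n)
    have "set_integrable lborel {0..t} (\<lambda>s. L * M * ((L * s) ^ n / fact n))"
      by (intro borel_integrable_atLeastAtMost' continuous_intros) simp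
    moreover have "\<bar>D s\<bar> \<le> L * M * ((L * s) ^ n / fact n)" if "s \<in> {0..t}" for s
      using Suc that by simp
    ultimately have "(LINT s:{0..t}|lborel. \<bar>D s\<bar>) \<le> (LINT s:{0..t}|lborel. L * M * ((L * s) ^ n / fact n))"
      using int[of t] Suc.prems by (intro set_integral_mono) auto
    also have "\<dots> = L * M * (L ^ n / fact n) * (LINT s:{0..t}|lborel. s ^ n)"
      by (simp add: power_mult_distrib field_simps)
    also have "(LINT s:{0..t}|lborel. s ^ n) = t ^ Suc n / Suc n"
      using integral_power[of 0 t n] Suc.prems by (simp add: set_lebesgue_integral_def mult.commute)
    finally have "L * (LINT s:{0..t}|lborel. \<bar>D s\<bar>) \<le> L * (L * M * (L ^ n / fact n) * (t ^ Suc n / Suc n))"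
      using \<open>0 \<le> L\<close> by (rule mult_left_mono)
    also have "\<dots> = L * M * ((L * t) ^ Suc n / fact (Suc n))"
      by (simp add: power_mult_distrib field_simps)
    finally show ?case using bound[OF Suc.prems] by simp
  qed
qed

lemma integral_gronwall_zero:
  fixes D :: "real \<Rightarrow> real"
  assumes "set_integrable lborel {0..T} D" "0 \<le> L"
    and "\<And>t. t \<in> {0..T} \<Longrightarrow> \<bar>D t\<bar> \<le> L * (LINT s:{0..t}|lborel. \<bar>D s\<bar>)"
    and t: "t \<in> {0..T}"
  shows "D t = 0"
proof -
  define M where "M = (LINT s:{0..T}|lborel. \<bar>D s\<bar>)"
  have "(\<lambda>n. L * M * ((L * t) ^ n / fact n)) \<longlonglongrightarrow> L * M * 0"
    using summable_LIMSEQ_zero[OF summable_exp[of "L * t"]]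
    by (intro tendsto_mult_left) (simp add: field_simps)
  then have "\<bar>D t\<bar> \<le> L * M * 0"
    using integral_gronwall_iterate[OF assms] by (intro LIMSEQ_le_const) (auto simp: M_def)
  then show ?thesis by simp
qed

lemma inner_lift_volterra:
  fixes A :: "'h::{real_inner,banach,second_countable_topology} \<Rightarrow>\<^sub>L 'h" and g \<nu> :: 'h
    and Z :: "real \<Rightarrow> 'h" and W \<phi> :: "real \<Rightarrow> real"
  assumes t: "0 \<le> t" and W: "continuous_on {0..t} W" "W 0 = 0"
    and Z_int: "set_integrable lborel {0..t} Z"
    and F_int: "set_integrable lborel {0..t} (\<lambda>r. blinfun_apply A (Z r) + \<phi> r *\<^sub>R \<nu>)"
    and Z_eq: "\<And>s. s \<in> {0..t} \<Longrightarrow>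
      Z s = (LINT r:{0..s}|lborel. blinfun_apply A (Z r) + \<phi> r *\<^sub>R \<nu>) + (\<sigma> * W s) *\<^sub>R \<nu>"
    and I: "has_stoch_integral (\<lambda>s. exp_kernel g A \<nu> (t - s)) W 0 t I"
  shows "set_integrable lborel {0..t} (\<lambda>s. exp_kernel g A \<nu> (t - s) * \<phi> s)"
    and "g \<bullet> Z t = (LINT s:{0..t}|lborel. exp_kernel g A \<nu> (t - s) * \<phi> s) + \<sigma> * I"
proof -
  define F where "F = (\<lambda>r. blinfun_apply A (Z r) + \<phi> r *\<^sub>R \<nu>)"
  let ?K = "\<lambda>z s. exp_kernel g A z (t - s)"
  let ?P = "\<lambda>s. blinfun_apply A (LINT r:{0..s}|lborel. F r)"
  have I_eq: "I = (g \<bullet> \<nu>) * W t + integral {0..t} (\<lambda>s. W s * ?K (blinfun_apply A \<nu>) s)"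
    using has_stoch_integral_unique[OF I has_stoch_integral_exp_kernel[OF t W] t] .
  have KAZ: "?K (blinfun_apply A (Z s)) s = ?K (?P s) s + \<sigma> * (W s * ?K (blinfun_apply A \<nu>) s)"
    if "s \<in> {0..t}" for s
    using Z_eq[OF that]
    by (simp add: F_def blinfun.add_right blinfun.scaleR_right exp_kernel_add exp_kernel_scaleR)
  have KF: "?K (F s) s = ?K (blinfun_apply A (Z s)) s + ?K \<nu> s * \<phi> s" for s
    by (simp add: F_def exp_kernel_add exp_kernel_scaleR)
  have int_KAZ: "set_integrable lborel {0..t} (\<lambda>s. ?K (blinfun_apply A (Z s)) s)"
    by (rule set_integrable_exp_kernel_convolution[OF t Z_int])
  have int_KF: "set_integrable lborel {0..t} (\<lambda>s. ?K (F s) s)"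
    using set_integrable_exp_kernel_convolution[OF t F_int[folded F_def], of g A id_blinfun] by simp
  have int_W: "set_integrable lborel {0..t} (\<lambda>s. W s * ?K (blinfun_apply A \<nu>) s)"
    by (intro borel_integrable_atLeastAtMost' continuous_intros W(1))
  show int_K\<phi>: "set_integrable lborel {0..t} (\<lambda>s. ?K \<nu> s * \<phi> s)"
    using set_integral_diff(1)[OF int_KF int_KAZ] by (simp add: KF)
  have int_KP: "set_integrable lborel {0..t} (\<lambda>s. ?K (?P s) s)"
    using set_integral_diff(1)[OF int_KAZ set_integrable_mult_right[OF int_W, of \<sigma>]]
    by (rule set_integrable_cong[THEN iffD1, rotated -1]) (auto simp: KAZ)
  have "(LINT s:{0..t}|lborel. ?K (F s) s)
      = (LINT s:{0..t}|lborel. ?K (blinfun_apply A (Z s)) s) + (LINT s:{0..t}|lborel. ?K \<nu> s * \<phi> s)"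
    unfolding KF by (rule set_integral_add(2)[OF int_KAZ int_K\<phi>])
  moreover have "(LINT s:{0..t}|lborel. ?K (blinfun_apply A (Z s)) s)
      = (LINT s:{0..t}|lborel. ?K (?P s) s + \<sigma> * (W s * ?K (blinfun_apply A \<nu>) s))"
    by (rule set_lebesgue_integral_cong) (auto simp: KAZ)
  moreover have "\<dots> = (LINT s:{0..t}|lborel. ?K (?P s) s)
      + \<sigma> * (LINT s:{0..t}|lborel. W s * ?K (blinfun_apply A \<nu>) s)"
    using set_integral_add(2)[OF int_KP set_integrable_mult_right[OF int_W, of \<sigma>]] by simp
  moreover have "(LINT s:{0..t}|lborel. W s * ?K (blinfun_apply A \<nu>) s)
      = integral {0..t} (\<lambda>s. W s * ?K (blinfun_apply A \<nu>) s)"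
    by (rule set_borel_integral_eq_integral(2)[OF int_W])
  moreover have "g \<bullet> Z t = g \<bullet> (LINT r:{0..t}|lborel. F r) + \<sigma> * W t * (g \<bullet> \<nu>)"
    using Z_eq[of t] t by (simp add: F_def inner_add_right)
  ultimately show "g \<bullet> Z t = (LINT s:{0..t}|lborel. ?K \<nu> s * \<phi> s) + \<sigma> * I"
    using exp_kernel_convolution_primitive[OF t F_int[folded F_def], of g A] I_eq
    by (simp add: algebra_simps)
qed

lemma volterra_defect_of_lift:
  fixes A :: "'h::{real_inner,banach,second_countable_topology} \<Rightarrow>\<^sub>L 'h" and g \<nu> :: 'h
    and Z :: "real \<Rightarrow> 'h" and u X W :: "real \<Rightarrow> real" and c \<alpha> \<beta> \<sigma> :: real
  defines "Y \<equiv> \<lambda>s. c + g \<bullet> Z s"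
  assumes t: "0 \<le> t" and W: "continuous_on {0..t} W" "W 0 = 0"
    and Z_int: "set_integrable lborel {0..t} Z"
    and Z_eq: "\<And>s. s \<in> {0..t} \<Longrightarrow>
      set_integrable lborel {0..s} (\<lambda>r. blinfun_apply A (Z r) + (\<alpha> * u r - \<beta> * Y r) *\<^sub>R \<nu>) \<and>
      Z s = (LINT r:{0..s}|lborel. blinfun_apply A (Z r) + (\<alpha> * u r - \<beta> * Y r) *\<^sub>R \<nu>) + (\<sigma> * W s) *\<^sub>R \<nu>"
    and I: "has_stoch_integral (\<lambda>s. exp_kernel g A \<nu> (t - s)) W 0 t I"
    and X_int: "set_integrable lborel {0..t} (\<lambda>s. exp_kernel g A \<nu> (t - s) * (\<alpha> * u s - \<beta> * X s))"
    and X_eq: "X t = c + (LINT s:{0..t}|lborel. exp_kernel g A \<nu> (t - s) * (\<alpha> * u s - \<beta> * X s)) + \<sigma> * I"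
  shows "X t - Y t = - \<beta> * (LINT s:{0..t}|lborel. exp_kernel g A \<nu> (t - s) * (X s - Y s))"
proof -
  let ?\<phi> = "\<lambda>s. \<alpha> * u s - \<beta> * Y s"
  have int_\<phi>: "set_integrable lborel {0..t} (\<lambda>s. exp_kernel g A \<nu> (t - s) * ?\<phi> s)"
    and Z_t: "g \<bullet> Z t = (LINT s:{0..t}|lborel. exp_kernel g A \<nu> (t - s) * ?\<phi> s) + \<sigma> * I"
    using inner_lift_volterra[where \<phi> = ?\<phi> and \<sigma> = \<sigma>, OF t W Z_int _ _ I] Z_eq t by auto
  have "X t - Y t = (LINT s:{0..t}|lborel.
      exp_kernel g A \<nu> (t - s) * (\<alpha> * u s - \<beta> * X s) - exp_kernel g A \<nu> (t - s) * ?\<phi> s)"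
    using X_eq Z_t set_integral_diff(2)[OF X_int int_\<phi>] by (simp add: Y_def)
  also have "\<dots> = (LINT s:{0..t}|lborel. - \<beta> * (exp_kernel g A \<nu> (t - s) * (X s - Y s)))"
    by (simp add: algebra_simps)
  finally show ?thesis unfolding set_integral_mult_right .
qed

lemma pathwise_lift_inner_eq:
  fixes T \<alpha> \<beta> \<sigma> X0 :: real and g \<nu> \<zeta>0 :: "'h::{real_inner,banach,second_countable_topology}"
    and A :: "'h \<Rightarrow>\<^sub>L 'h" and u X W :: "real \<Rightarrow> real" and Z :: "real \<Rightarrow> 'h"
  assumes W: "continuous_on {0..T} W" "W 0 = 0"
    and \<zeta>0: "g \<bullet> \<zeta>0 = X0"
    and X_int: "set_integrable lborel {0..T} X"
    and X_eq: "\<forall>t\<in>{0..T}.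
          set_integrable lborel {0..t} (\<lambda>s. exp_kernel g A \<nu> (t - s) * (\<alpha> * u s - \<beta> * X s)) \<and>
          (\<exists>I. has_stoch_integral (\<lambda>s. exp_kernel g A \<nu> (t - s)) W 0 t I \<and>
               X t = X0 + (LINT s:{0..t}|lborel. exp_kernel g A \<nu> (t - s) * (\<alpha> * u s - \<beta> * X s)) + \<sigma> * I)"
    and Z_int: "set_integrable lborel {0..T} Z"
    and Z_eq: "\<forall>t\<in>{0..T}.
          set_integrable lborel {0..t}
            (\<lambda>s. (blinfun_apply A (Z s) - (\<beta> * (g \<bullet> Z s)) *\<^sub>R \<nu>)
                 - (\<beta> * (g \<bullet> \<zeta>0)) *\<^sub>R \<nu> + (\<alpha> * u s) *\<^sub>R \<nu>) \<and>
          (\<exists>I. has_stoch_integral (\<lambda>s. \<sigma> *\<^sub>R \<nu>) W 0 t I \<and>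
               Z t = (LINT s:{0..t}|lborel.
                          (blinfun_apply A (Z s) - (\<beta> * (g \<bullet> Z s)) *\<^sub>R \<nu>)
                          - (\<beta> * (g \<bullet> \<zeta>0)) *\<^sub>R \<nu> + (\<alpha> * u s) *\<^sub>R \<nu>) + I)"
    and t: "t \<in> {0..T}"
  shows "X t = g \<bullet> \<zeta>0 + g \<bullet> Z t"
proof -
  define Y where "Y = (\<lambda>s. g \<bullet> \<zeta>0 + g \<bullet> Z s)"
  define D where "D = (\<lambda>s. X s - Y s)"
  have drift_eq: "(\<lambda>s. (blinfun_apply A (Z s) - (\<beta> * (g \<bullet> Z s)) *\<^sub>R \<nu>)
        - (\<beta> * (g \<bullet> \<zeta>0)) *\<^sub>R \<nu> + (\<alpha> * u s) *\<^sub>R \<nu>)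
      = (\<lambda>s. blinfun_apply A (Z s) + (\<alpha> * u s - \<beta> * Y s) *\<^sub>R \<nu>)"
    by (simp add: fun_eq_iff Y_def algebra_simps)
  have D_int: "set_integrable lborel {0..T} D"
    unfolding D_def Y_def
    by (intro set_integral_diff(1)[OF X_int] set_integral_add(1) borel_integrable_atLeastAtMost'
          set_integrable_bounded_linear[OF bounded_linear_inner_right Z_int] continuous_on_const)
  define L where "L = \<bar>\<beta>\<bar> * (norm g * norm \<nu> * exp (T * norm A))"
  have "\<bar>D t\<bar> \<le> L * (LINT s:{0..t}|lborel. \<bar>D s\<bar>)" if t: "t \<in> {0..T}" for t
  proof -
    obtain I where I: "has_stoch_integral (\<lambda>s. exp_kernel g A \<nu> (t - s)) W 0 t I"
      and X_t: "X t = X0 + (LINT s:{0..t}|lborel. exp_kernel g A \<nu> (t - s) * (\<alpha> * u s - \<beta> * X s)) + \<sigma> * I"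
      and X_t_int: "set_integrable lborel {0..t}
        (\<lambda>s. exp_kernel g A \<nu> (t - s) * (\<alpha> * u s - \<beta> * X s))"
      using X_eq t by blast
    have "D t = - \<beta> * (LINT s:{0..t}|lborel. exp_kernel g A \<nu> (t - s) * D s)"
      unfolding D_def Y_def
    proof (rule volterra_defect_of_lift)
      show "continuous_on {0..t} W" "set_integrable lborel {0..t} Z"
        using continuous_on_subset[OF W(1)] set_integrable_subset[OF Z_int] t by auto
      let ?F = "\<lambda>r. blinfun_apply A (Z r) + (\<alpha> * u r - \<beta> * (g \<bullet> \<zeta>0 + g \<bullet> Z r)) *\<^sub>R \<nu>"
      show "set_integrable lborel {0..s} ?F \<and> Z s = (LINT r:{0..s}|lborel. ?F r) + (\<sigma> * W s) *\<^sub>R \<nu>"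
        if "s \<in> {0..t}" for s
        using Z_eq that t W(2) unfolding drift_eq Y_def by (auto simp: has_stoch_integral_const_iff)
    qed (use I X_t X_t_int t W(2) \<zeta>0 in auto)
    moreover have "set_integrable lborel {0..t} D" using set_integrable_subset[OF D_int] t by auto
    with t have "\<bar>LINT s:{0..t}|lborel. exp_kernel g A \<nu> (t - s) * D s\<bar>
        \<le> norm g * norm \<nu> * exp (T * norm A) * (LINT s:{0..t}|lborel. \<bar>D s\<bar>)"
      by (intro set_integral_exp_kernel_abs_le) auto
    ultimately show ?thesis by (simp add: L_def abs_mult mult.assoc mult_left_mono)
  qed
  from integral_gronwall_zero[OF D_int _ this t] have "D t = 0" by (simp add: L_def)
  then show ?thesis by (simp add: D_def Y_def)
qed

theorem theorem2p2:
  fixes M :: "'w measure" and W :: "'w \<Rightarrow> real \<Rightarrow> real"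
    and T \<alpha> \<beta> \<sigma> X0 :: real
    and g \<nu> \<zeta>0 :: "'h::{real_inner, banach, second_countable_topology}"
    and A :: "'h \<Rightarrow>\<^sub>L 'h"
    and K :: "real \<Rightarrow> real"
    and u X :: "'w \<Rightarrow> real \<Rightarrow> real"
    and Z :: "'w \<Rightarrow> real \<Rightarrow> 'h"
  assumes T_pos: "T > 0" and \<alpha>_pos: "\<alpha> > 0" and \<beta>_pos: "\<beta> > 0" and \<sigma>_pos: "\<sigma> > 0"
    and BM: "std_brownian_motion M W"
    and g_nz: "g \<noteq> 0" and \<nu>_norm: "norm \<nu> = 1"
    and K_def: "\<forall>t. K t = g \<bullet> blinfun_apply (op_exp (t *\<^sub>R A)) \<nu>"
    and u_L2a: "L2a M W T u"
    and X_sol: "AE w in M. set_integrable lborel {0..T} (X w) \<and>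
       (\<forall>t\<in>{0..T}.
          set_integrable lborel {0..t} (\<lambda>s. K (t - s) * (\<alpha> * u w s - \<beta> * X w s)) \<and>
          (\<exists>I. has_stoch_integral (\<lambda>s. K (t - s)) (W w) 0 t I \<and>
               X w t = X0 + (LINT s:{0..t}|lborel. K (t - s) * (\<alpha> * u w s - \<beta> * X w s))
                       + \<sigma> * I))"
    and \<zeta>0_def: "\<zeta>0 = (X0 / (norm g)\<^sup>2) *\<^sub>R g"
    and Z_sol: "AE w in M. set_integrable lborel {0..T} (Z w) \<and>
       (\<forall>t\<in>{0..T}.
          set_integrable lborel {0..t}
            (\<lambda>s. (blinfun_apply A (Z w s) - (\<beta> * (g \<bullet> Z w s)) *\<^sub>R \<nu>)
                 - (\<beta> * (g \<bullet> \<zeta>0)) *\<^sub>R \<nu> + (\<alpha> * u w s) *\<^sub>R \<nu>) \<and>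
          (\<exists>I. has_stoch_integral (\<lambda>s. \<sigma> *\<^sub>R \<nu>) (W w) 0 t I \<and>
               Z w t = (LINT s:{0..t}|lborel.
                          (blinfun_apply A (Z w s) - (\<beta> * (g \<bullet> Z w s)) *\<^sub>R \<nu>)
                          - (\<beta> * (g \<bullet> \<zeta>0)) *\<^sub>R \<nu> + (\<alpha> * u w s) *\<^sub>R \<nu>) + I))"
  shows "AE w in M. \<forall>t\<in>{0..T}. X w t = g \<bullet> \<zeta>0 + g \<bullet> Z w t"
proof -
  have K_eq: "K = exp_kernel g A \<nu>" using K_def by (auto simp: exp_kernel_def)
  have \<zeta>0: "g \<bullet> \<zeta>0 = X0"
    using g_nz by (simp add: \<zeta>0_def power2_norm_eq_inner)
  have "AE w in M. W w 0 = 0 \<and> continuous_on {0..} (W w)"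
    using BM unfolding std_brownian_motion_def by blast
  with X_sol Z_sol show ?thesis
  proof eventually_elim
    case (elim w)
    then have "continuous_on {0..T} (W w)" "W w 0 = 0"
      by (auto intro: continuous_on_subset)
    with elim show ?case
      unfolding K_eq by (blast intro: pathwise_lift_inner_eq[OF _ _ \<zeta>0])
  qed
qed

end
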